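(* Let $L$ be an oriented link diagram, and let $(o,\epsilon)$ and $(o',\epsilon')$ be two choices of crossing orientations together with valid sign assignments. Let $f,g\colon\llbracket L,o,\epsilon\rrbracket\to\llbracket L,o',\epsilon'\rrbracket$ be cubical chain isomorphisms whose components are $f_\alpha=r_\alpha\operatorname{id}_{L_\alpha}$ and $g_\alpha=s_\alpha\operatorname{id}_{L_\alpha}$ for invertible scalars $r_\alpha,s_\alpha\in\Bbbk^\times$ (for every vertex $\alpha$ of the cube of resolutions). Then $f=cg$ for some invertible scalar $c\in\Bbbk^\times$.
   Context: $\Bbbk=\mathbb{Z}[\pi]/(\pi^2-1)$, $\Bbbk^\times=\{\pm1,\pm\pi\}$. $\llbracket L,o,\epsilon\rrbracket$ is Putyra's generalized Khovanov bracket, a chain complex in the additive closure of Putyra's chronological cobordism category $\mathcal{C}hron\mathcal{C}ob^3_{gen}$ over $\Bbbk$: its terms are direct sums of the resolutions $L_\alpha$, $\alpha\in\{0,1\}^n$, of the diagram, and its differential has components $\epsilon_e d_e$ where $d_e$ is the saddle cobordism along edge $e$ of the cube (local orientation given by crossing orientation $o$) and $\epsilon$ is a valid sign assignment (product of signs around each 2-face equals $-\sigma$, $\sigma\in\{1,\pi\}$ the face's commutativity constant). A chain map is cubical if it has no nonzero components between different resolutions $L_\alpha\to L_\beta$, $\alpha\ne\beta$. *)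

theory Defs
  imports Main
begin

text \<open>An element K a b represents a + b*pi.\<close>
datatype kk = K int int

instantiation kk :: comm_ring_1
begin
fun plus_kk where "K a b + K c d = K (a + c) (b + d)"
fun minus_kk where "K a b - K c d = K (a - c) (b - d)"
fun uminus_kk where "- K a b = K (- a) (- b)"
fun times_kk where "K a b * K c d = K (a * c + b * d) (a * d + b * c)"
definition zero_kk where "0 = K 0 0"
definition one_kk where "1 = K 1 0"
instance
proof
  fix x y z :: kk
  show "x * y * z = x * (y * z)"
    by (cases x; cases y; cases z) (simp add: algebra_simps)
  show "x * y = y * x" by (cases x; cases y) (simp add: algebra_simps)
  show "1 * x = x" by (cases x) (simp add: one_kk_def)
  show "x + y + z = x + (y + z)" by (cases x; cases y; cases z) simp
  show "x + y = y + x" by (cases x; cases y) simp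
  show "0 + x = x" by (cases x) (simp add: zero_kk_def)
  show "- x + x = 0" by (cases x) (simp add: zero_kk_def)
  show "x - y = x + - y" by (cases x; cases y) simp
  show "(x + y) * z = x * z + y * z"
    by (cases x; cases y; cases z) (simp add: algebra_simps)
  show "(0::kk) \<noteq> 1" by (simp add: zero_kk_def one_kk_def)
qed
end

definition pik :: kk where "pik = K 0 1"

lemma pik_squared: "pik * pik = 1"
  by (simp add: pik_def one_kk_def)

definition kunits :: "kk set" where "kunits = {1, -1, pik, - pik}"

text \<open>Vertices of the cube {0,1}^n are encoded as subsets alpha of {..<n}
  (the crossings given the 1-resolution). An edge is a pair (alpha, i) with
  i < n, i not in alpha, going from alpha to insert i alpha.\<close>

definition cube_vertex :: "nat \<Rightarrow> nat set \<Rightarrow> bool" where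
  "cube_vertex n \<alpha> \<longleftrightarrow> \<alpha> \<subseteq> {..<n}"

definition cube_edge :: "nat \<Rightarrow> nat set \<Rightarrow> nat \<Rightarrow> bool" where
  "cube_edge n \<alpha> i \<longleftrightarrow> \<alpha> \<subseteq> {..<n} \<and> i < n \<and> i \<notin> \<alpha>"

definition cube_face :: "nat \<Rightarrow> nat set \<Rightarrow> nat \<Rightarrow> nat \<Rightarrow> bool" where
  "cube_face n \<alpha> i j \<longleftrightarrow> \<alpha> \<subseteq> {..<n} \<and> i < j \<and> j < n \<and> i \<notin> \<alpha> \<and> j \<notin> \<alpha>"

definition valid_sign_assignment ::
  "nat \<Rightarrow> (nat set \<Rightarrow> nat \<Rightarrow> nat \<Rightarrow> kk) \<Rightarrow> (nat set \<Rightarrow> nat \<Rightarrow> kk) \<Rightarrow> bool" where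
  "valid_sign_assignment n \<sigma> \<epsilon> \<longleftrightarrow>
     (\<forall>\<alpha> i. cube_edge n \<alpha> i \<longrightarrow> \<epsilon> \<alpha> i \<in> kunits) \<and>
     (\<forall>\<alpha> i j. cube_face n \<alpha> i j \<longrightarrow>
        \<epsilon> \<alpha> i * \<epsilon> (insert i \<alpha>) j * \<epsilon> \<alpha> j * \<epsilon> (insert j \<alpha>) i = - \<sigma> \<alpha> i j)"

text \<open>A cubical chain map between the brackets [[L,o,eps]] and [[L,o',eps']] whose
  component at alpha is r alpha * id_{L_alpha}. The chain map condition along an
  edge e = (alpha,i) reads  f_{alpha+i} o (eps_e d_e) = (eps'_e d'_e) o f_alpha,
  i.e. (r(alpha+i) eps_e) . d_e = (eps'_e r(alpha)) . d'_e, where d_e is the saddle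
  with local orientation o i and d'_e the saddle with orientation o' i.
  Morphisms of the cobordism category are modelled by an abstract type 'm
  with a k-action smult, and saddle (b) alpha i is the saddle cobordism
  L_alpha -> L_{alpha+i} with local orientation b.\<close>
definition scalar_cubical_chain_map ::
  "(kk \<Rightarrow> 'm \<Rightarrow> 'm) \<Rightarrow> (bool \<Rightarrow> nat set \<Rightarrow> nat \<Rightarrow> 'm) \<Rightarrow> nat \<Rightarrow>
   (nat \<Rightarrow> bool) \<Rightarrow> (nat set \<Rightarrow> nat \<Rightarrow> kk) \<Rightarrow> (nat \<Rightarrow> bool) \<Rightarrow> (nat set \<Rightarrow> nat \<Rightarrow> kk) \<Rightarrow>
   (nat set \<Rightarrow> kk) \<Rightarrow> bool" where
  "scalar_cubical_chain_map smult saddle n ori \<epsilon> ori' \<epsilon>' r \<longleftrightarrow>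
     (\<forall>\<alpha>. cube_vertex n \<alpha> \<longrightarrow> r \<alpha> \<in> kunits) \<and>
     (\<forall>\<alpha> i. cube_edge n \<alpha> i \<longrightarrow>
        smult (r (insert i \<alpha>) * \<epsilon> \<alpha> i) (saddle (ori i) \<alpha> i)
        = smult (\<epsilon>' \<alpha> i * r \<alpha>) (saddle (ori' i) \<alpha> i))"

end

theory Submission
  imports Defs
begin

(* Along an edge of the cube the chain map conditions for f and g involve the same
   reorientation unit of the saddle, so it cancels in the product r_alpha s_alpha: this
   product is constant on the (connected) cube. Since every unit of k squares to 1,
   s_alpha is its own inverse, hence r_alpha = c s_alpha with c = r_{} s_{}. *)

lemma kunits_square: "x \<in> kunits \<Longrightarrow> x * x = 1"
  by (auto simp: kunits_def pik_squared)

lemma kunits_mult: "x \<in> kunits \<Longrightarrow> y \<in> kunits \<Longrightarrow> x * y \<in> kunits"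
  by (auto simp: kunits_def pik_squared)

lemma cube_edge_invariant_eq_empty:
  assumes edge_inv: "\<And>\<alpha> i. cube_edge n \<alpha> i \<Longrightarrow> h (insert i \<alpha>) = h \<alpha>"
    and "cube_vertex n \<alpha>"
  shows "h \<alpha> = h {}"
proof -
  have "\<alpha> \<subseteq> {..<n} \<longrightarrow> h \<alpha> = h {}" if "finite \<alpha>"
    using that
  proof (induction \<alpha> rule: finite_induct)
    case empty
    then show ?case by simp
  next
    case (insert i \<alpha>)
    then show ?case
      using edge_inv[of \<alpha> i] by (auto simp: cube_edge_def)
  qed
  then show ?thesis
    using \<open>cube_vertex n \<alpha>\<close> finite_subset[of \<alpha> "{..<n}"] by (auto simp: cube_vertex_def)
qed

lemma smult_cancel_free:
  assumes smult_assoc: "\<And>a b x. smult a (smult b x) = smult (a * b) x"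
    and free: "\<And>a c. smult a x = smult c x \<Longrightarrow> a = c"
    and "y = smult u x"
    and "smult a x = smult b y"
  shows "a = b * u"
  using assms(3,4) by (intro free) (simp add: smult_assoc)

lemma saddle_reorient_factor:
  assumes smult_one: "\<And>x. smult 1 x = x"
    and saddle_reorient: "\<And>b. \<exists>u \<in> kunits. saddle (\<not> b) \<alpha> i = smult u (saddle b \<alpha> i)"
  obtains u where "saddle b' \<alpha> i = smult u (saddle b \<alpha> i)"
proof (cases "b' = b")
  case True
  then show ?thesis using that[of 1] smult_one by simp
next
  case False
  then have "b' = (\<not> b)" by auto
  then show ?thesis using saddle_reorient[of b] that by auto
qed

lemma involutive_edge_relations_product_eq:
  fixes e e' r r' s s' u :: "'a :: comm_monoid_mult"
  assumes "e * e = 1" and "s * s = 1" and "s' * s' = 1"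
    and hr: "r' * e = e' * r * u" and hs: "s' * e = e' * s * u"
  shows "r' * s' = r * s"
proof -
  have "r' * s * e = (r' * e) * s"
    by (simp add: ac_simps)
  also have "\<dots> = r * (e' * s * u)"
    unfolding hr by (simp add: ac_simps)
  also have "\<dots> = r * s' * e"
    unfolding hs[symmetric] by (simp add: ac_simps)
  finally have "r' * s * e * e = r * s' * e * e"
    by simp
  then have cross: "r' * s = r * s'"
    using \<open>e * e = 1\<close> by (simp add: mult.assoc)
  have "r' * s' = r' * s' * (s * s)"
    using \<open>s * s = 1\<close> by simp
  also have "\<dots> = (r * s') * s' * s"
    unfolding cross[symmetric] by (simp add: ac_simps)
  also have "\<dots> = r * s"
    using \<open>s' * s' = 1\<close> by (simp add: ac_simps)
  finally show ?thesis .
qed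

lemma scalar_cubical_chain_maps_product_edge_invariant:
  fixes smult :: "kk \<Rightarrow> 'm \<Rightarrow> 'm"
  assumes smult_one: "\<And>x. smult 1 x = x"
    and smult_assoc: "\<And>a b x. smult a (smult b x) = smult (a * b) x"
    and saddle_reorient: "\<And>\<alpha> i b. cube_edge n \<alpha> i \<Longrightarrow>
          \<exists>u \<in> kunits. saddle (\<not> b) \<alpha> i = smult u (saddle b \<alpha> i)"
    and saddle_free: "\<And>\<alpha> i b a c. cube_edge n \<alpha> i \<Longrightarrow>
          smult a (saddle b \<alpha> i) = smult c (saddle b \<alpha> i) \<Longrightarrow> a = c"
    and f_chain: "scalar_cubical_chain_map smult saddle n ori \<epsilon> ori' \<epsilon>' r"
    and g_chain: "scalar_cubical_chain_map smult saddle n ori \<epsilon> ori' \<epsilon>' s"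
    and e: "cube_edge n \<alpha> i"
    and eps_unit: "\<epsilon> \<alpha> i \<in> kunits"
  shows "r (insert i \<alpha>) * s (insert i \<alpha>) = r \<alpha> * s \<alpha>"
proof -
  obtain u where u: "saddle (ori' i) \<alpha> i = smult u (saddle (ori i) \<alpha> i)"
    using saddle_reorient_factor[where smult = smult and saddle = saddle,
        OF smult_one saddle_reorient[OF e]]
    by blast
  note cancel = smult_cancel_free[OF smult_assoc saddle_free[OF e, where b = "ori i"] u]
  have hr: "r (insert i \<alpha>) * \<epsilon> \<alpha> i = \<epsilon>' \<alpha> i * r \<alpha> * u"
    using f_chain e unfolding scalar_cubical_chain_map_def by (blast intro: cancel)
  have hs: "s (insert i \<alpha>) * \<epsilon> \<alpha> i = \<epsilon>' \<alpha> i * s \<alpha> * u"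
    using g_chain e unfolding scalar_cubical_chain_map_def by (blast intro: cancel)
  have "s \<alpha> \<in> kunits" and "s (insert i \<alpha>) \<in> kunits"
    using g_chain e by (auto simp: scalar_cubical_chain_map_def cube_edge_def cube_vertex_def)
  with eps_unit show ?thesis
    using involutive_edge_relations_product_eq[OF kunits_square kunits_square kunits_square hr hs]
    by blast
qed

theorem lemma3p3:
  fixes smult :: "kk \<Rightarrow> 'm \<Rightarrow> 'm"
    and saddle :: "bool \<Rightarrow> nat set \<Rightarrow> nat \<Rightarrow> 'm"
    and n :: nat
    and ori ori' :: "nat \<Rightarrow> bool"
    and \<sigma> \<sigma>' :: "nat set \<Rightarrow> nat \<Rightarrow> nat \<Rightarrow> kk"
    and \<epsilon> \<epsilon>' :: "nat set \<Rightarrow> nat \<Rightarrow> kk"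
    and r s :: "nat set \<Rightarrow> kk"
  assumes smult_one: "\<And>x. smult 1 x = x"
    and smult_assoc: "\<And>a b x. smult a (smult b x) = smult (a * b) x"
    and saddle_reorient: "\<And>\<alpha> i b. cube_edge n \<alpha> i \<Longrightarrow>
          \<exists>u \<in> kunits. saddle (\<not> b) \<alpha> i = smult u (saddle b \<alpha> i)"
    and saddle_free: "\<And>\<alpha> i b a c. cube_edge n \<alpha> i \<Longrightarrow>
          smult a (saddle b \<alpha> i) = smult c (saddle b \<alpha> i) \<Longrightarrow> a = c"
    and sigma_vals: "\<And>\<alpha> i j. cube_face n \<alpha> i j \<Longrightarrow> \<sigma> \<alpha> i j \<in> {1, pik}"
    and sigma'_vals: "\<And>\<alpha> i j. cube_face n \<alpha> i j \<Longrightarrow> \<sigma>' \<alpha> i j \<in> {1, pik}"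
    and eps_valid: "valid_sign_assignment n \<sigma> \<epsilon>"
    and eps'_valid: "valid_sign_assignment n \<sigma>' \<epsilon>'"
    and f_chain: "scalar_cubical_chain_map smult saddle n ori \<epsilon> ori' \<epsilon>' r"
    and g_chain: "scalar_cubical_chain_map smult saddle n ori \<epsilon> ori' \<epsilon>' s"
  shows "\<exists>c \<in> kunits. \<forall>\<alpha>. cube_vertex n \<alpha> \<longrightarrow> r \<alpha> = c * s \<alpha>"
proof -
  have s_units: "s \<alpha> \<in> kunits" if "cube_vertex n \<alpha>" for \<alpha>
    using g_chain that by (simp add: scalar_cubical_chain_map_def)
  have edge_inv: "r (insert i \<alpha>) * s (insert i \<alpha>) = r \<alpha> * s \<alpha>"
    if "cube_edge n \<alpha> i" for \<alpha> i
    using that eps_valid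
    by (intro scalar_cubical_chain_maps_product_edge_invariant[OF smult_one smult_assoc
          saddle_reorient saddle_free f_chain g_chain])
      (auto simp: valid_sign_assignment_def)
  have "r {} * s {} \<in> kunits"
    using f_chain s_units
    by (intro kunits_mult) (auto simp: scalar_cubical_chain_map_def cube_vertex_def)
  moreover have "r \<alpha> = (r {} * s {}) * s \<alpha>" if "cube_vertex n \<alpha>" for \<alpha>
  proof -
    have "r \<alpha> = (r \<alpha> * s \<alpha>) * s \<alpha>"
      using kunits_square[OF s_units[OF that]] by (simp add: mult.assoc)
    then show ?thesis
      using cube_edge_invariant_eq_empty[of n "\<lambda>\<alpha>. r \<alpha> * s \<alpha>", OF edge_inv that] by simp
  qed
  ultimately show ?thesis by blast
qed

end
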